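(* Let $\mathcal{C}$ be an ordinary smooth absolutely irreducible projective curve of genus $g\ge1$ over $\mathbb{F}_q$ with absolutely simple Jacobian, and suppose that the Galois group of the splitting field of $P(T)$ over $\mathbb{Q}$ is the Weyl group $\mathcal{W}_g$ of $\mathrm{Sp}(2g)$, acting on the roots so that for each $i\in\{1,\ldots,g\}$ it contains an automorphism exchanging $\tau_i$ and $\overline{\tau_i}$ while fixing $\tau_j$ and $\overline{\tau_j}$ for all $j\neq i$. Then the Frobenius angles $\vartheta_1,\ldots,\vartheta_g$ are linearly independent modulo $1$; equivalently, there is no nonzero $(k_0,\ldots,k_g)\in\mathbb{Z}^{g+1}$ with $\prod_{i=1}^g\tau_i^{k_i}=q^{k_0}$.
   Context: Let $\mathcal{C}$ be a smooth projective curve of genus $g\ge1$ over the finite field $\mathbb{F}_q$ ($q$ a power of the prime $p$). The numerator of its zeta function is $P(T)=\prod_{j=1}^{2g}(1-\tau_j T)\in\mathbb{Z}[T]$, where the Frobenius eigenvalues $\tau_j$ satisfy $|\tau_j|=q^{1/2}$ and $\tau_{j+g}=\overline{\tau_j}$ for $j=1,\ldots,g$. Write $\tau_j = q^{1/2}e^{\pi i \vartheta_j}$ and $\tau_{j+g}=q^{1/2}e^{-\pi i\vartheta_j}$ with $\vartheta_j\in[0,1]$; these $\vartheta_j$ ($j=1,\ldots,g$) are the Frobenius angles. Fixing an embedding $\overline{\mathbb{Q}}\hookrightarrow\overline{\mathbb{Q}}_p$, the curve is ordinary if at least half of $\tau_1,\ldots,\tau_{2g}$ are $p$-adic units. Real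 numbers $\psi_1,\ldots,\psi_s$ are linearly independent modulo $1$ if $1,\psi_1,\ldots,\psi_s$ are linearly independent over $\mathbb{Z}$. The Weyl group $\mathcal{W}_g$ of $\mathrm{Sp}(2g)$ is the group of signed permutations of the $g$ pairs $\{\tau_i,\overline{\tau_i}\}$ (permuting the pairs and independently swapping elements within pairs). *)

theory Defs
  imports "HOL-Analysis.Analysis" "HOL-Computational_Algebra.Polynomial"
begin

text \<open>A place above the prime p on the algebraic numbers: a prime ideal of the ring of
  algebraic integers (inside the complex numbers) lying over p.  Fixing an embedding of the
  algebraic closure of Q into that of Q_p amounts to fixing such an ideal; an algebraic
  integer is a p-adic unit for the embedding iff it does not lie in the ideal.\<close>
definition prime_above :: "int \<Rightarrow> complex set \<Rightarrow> bool" where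
  "prime_above p PP \<longleftrightarrow>
     PP \<subseteq> {x. algebraic_int x} \<and> 0 \<in> PP \<and> 1 \<notin> PP \<and>
     (\<forall>x\<in>PP. \<forall>y\<in>PP. x + y \<in> PP) \<and>
     (\<forall>x\<in>PP. \<forall>a. algebraic_int a \<longrightarrow> a * x \<in> PP) \<and>
     (\<forall>a b. algebraic_int a \<longrightarrow> algebraic_int b \<longrightarrow> a * b \<in> PP \<longrightarrow> a \<in> PP \<or> b \<in> PP) \<and>
     (\<forall>n::int. of_int n \<in> PP \<longleftrightarrow> p dvd n)"

definition padic_unit :: "complex set \<Rightarrow> complex \<Rightarrow> bool" where
  "padic_unit PP x \<longleftrightarrow> algebraic_int x \<and> x \<notin> PP"

definition ordinary :: "complex set \<Rightarrow> nat \<Rightarrow> (nat \<Rightarrow> complex) \<Rightarrow> bool" where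
  "ordinary PP g tau \<longleftrightarrow> g \<le> card {j. j < 2*g \<and> padic_unit PP (tau j)}"

definition is_subfield_C :: "complex set \<Rightarrow> bool" where
  "is_subfield_C F \<longleftrightarrow> 0 \<in> F \<and> 1 \<in> F \<and>
     (\<forall>x\<in>F. \<forall>y\<in>F. x + y \<in> F \<and> x - y \<in> F \<and> x * y \<in> F) \<and> (\<forall>x\<in>F. inverse x \<in> F)"

definition gen_field :: "complex set \<Rightarrow> complex set" where
  "gen_field S = \<Inter>{F. is_subfield_C F \<and> S \<subseteq> F}"

text \<open>Field automorphisms of a subfield K of C (over Q automatically), normalised to be the
  identity outside K so that they are uniquely represented.\<close>
definition field_auts :: "complex set \<Rightarrow> (complex \<Rightarrow> complex) set" where
  "field_auts K = {\<sigma>. bij_betw \<sigma> K K \<and>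
      (\<forall>x\<in>K. \<forall>y\<in>K. \<sigma> (x + y) = \<sigma> x + \<sigma> y \<and> \<sigma> (x * y) = \<sigma> x * \<sigma> y) \<and>
      (\<forall>x. x \<notin> K \<longrightarrow> \<sigma> x = x)}"

definition partner :: "nat \<Rightarrow> nat \<Rightarrow> nat" where
  "partner g j = (if j < g then j + g else j - g)"

text \<open>Weyl group of Sp(2g): signed permutations of the pairs {j, j+g}, j < g, as permutations
  of the index set {0..<2g}.\<close>
definition weyl_Sp :: "nat \<Rightarrow> (nat \<Rightarrow> nat) set" where
  "weyl_Sp g = {\<pi>. bij_betw \<pi> {..<2*g} {..<2*g} \<and> (\<forall>j. 2*g \<le> j \<longrightarrow> \<pi> j = j) \<and>
      (\<forall>j<2*g. \<pi> (partner g j) = partner g (\<pi> j))}"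

end

theory Submission imports Defs begin

(*
  Write tau_j for the Frobenius eigenvalues, so that tau_j * tau_(j+g) = q for j < g.
  (1) Ordinarity and a place PP above p: q lies in PP, so no pair {tau_j, tau_(j+g)} consists of
      two p-adic units; since at least g of the 2g eigenvalues are units, every pair contains
      exactly one unit.
  (2) Multiplicative independence: if prod tau_i^(k_i) = q^(k_0), applying the Galois automorphism
      that swaps tau_i and tau_(i+g) and fixes the other pairs gives tau_i^(k_i) = tau_(i+g)^(k_i).
      With tau_i * tau_(i+g) = q this forces tau_i^(2m) = tau_(i+g)^(2m) = q^m for m = |k_i|, so both
      lie in PP, contradicting (1) unless k_i = 0; then q^(k_0) = 1 forces k_0 = 0.
  (3) Additive independence: an integer relation k_0 + sum k_i theta_i = 0 among the angles turns,
      after exponentiating with exp(2 pi i .), into prod tau_i^(2 k_i) = q^(sum k_i), so (2) applies.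
*)

lemma gen_field_subfield: "is_subfield_C (gen_field S)"
proof -
  have "is_subfield_C UNIV" by (simp add: is_subfield_C_def)
  then show ?thesis unfolding gen_field_def is_subfield_C_def by blast
qed

lemma gen_field_contains: "S \<subseteq> gen_field S"
  unfolding gen_field_def by blast

locale subfield_aut =
  fixes K :: "complex set" and \<sigma> :: "complex \<Rightarrow> complex"
  assumes subfield: "is_subfield_C K" and aut: "\<sigma> \<in> field_auts K"
begin

lemma zero_mem: "0 \<in> K" and one_mem: "1 \<in> K"
  and add_mem: "x \<in> K \<Longrightarrow> y \<in> K \<Longrightarrow> x + y \<in> K"
  and diff_mem: "x \<in> K \<Longrightarrow> y \<in> K \<Longrightarrow> x - y \<in> K"
  and mult_mem: "x \<in> K \<Longrightarrow> y \<in> K \<Longrightarrow> x * y \<in> K"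
  and inverse_mem: "x \<in> K \<Longrightarrow> inverse x \<in> K"
  using subfield by (auto simp: is_subfield_C_def)

lemma aut_add: "x \<in> K \<Longrightarrow> y \<in> K \<Longrightarrow> \<sigma> (x + y) = \<sigma> x + \<sigma> y"
  and aut_mult: "x \<in> K \<Longrightarrow> y \<in> K \<Longrightarrow> \<sigma> (x * y) = \<sigma> x * \<sigma> y"
  and aut_inj: "inj_on \<sigma> K"
  using aut by (auto simp: field_auts_def bij_betw_def)

lemma aut_zero: "\<sigma> 0 = 0"
  using aut_add[OF zero_mem zero_mem] by simp

lemma aut_one: "\<sigma> 1 = 1"
proof -
  have "\<sigma> 1 * \<sigma> 1 = \<sigma> 1" using aut_mult[OF one_mem one_mem] by simp
  moreover have "\<sigma> 1 \<noteq> 0"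
    using aut_inj zero_mem one_mem aut_zero by (metis inj_on_def zero_neq_one)
  ultimately show ?thesis by (metis mult_cancel_left1)
qed

lemma aut_uminus: "x \<in> K \<Longrightarrow> - x \<in> K \<and> \<sigma> (- x) = - \<sigma> x"
  using aut_add[of x "- x"] diff_mem[OF zero_mem, of x] aut_zero
  by (simp add: eq_neg_iff_add_eq_0 add.commute)

lemma aut_of_nat: "of_nat n \<in> K \<and> \<sigma> (of_nat n) = of_nat n"
proof (induction n)
  case (Suc n)
  then show ?case using add_mem[OF one_mem] aut_add[OF one_mem] aut_one by simp
qed (simp add: zero_mem aut_zero)

lemma aut_of_int: "of_int n \<in> K \<and> \<sigma> (of_int n) = of_int n"
proof (cases "n \<ge> 0")
  case True
  then show ?thesis using aut_of_nat[of "nat n"] by simp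
next
  case False
  then have "of_int n = - (of_nat (nat (- n)) :: complex)" by simp
  then show ?thesis using aut_uminus aut_of_nat by metis
qed

lemma aut_inverse: "x \<in> K \<Longrightarrow> \<sigma> (inverse x) = inverse (\<sigma> x)"
proof (cases "x = 0")
  case False
  assume x: "x \<in> K"
  have "\<sigma> x * \<sigma> (inverse x) = 1" using aut_mult[OF x inverse_mem[OF x]] False aut_one by simp
  then show ?thesis by (metis inverse_unique)
qed (simp add: aut_zero)

lemma aut_power: "x \<in> K \<Longrightarrow> x ^ n \<in> K \<and> \<sigma> (x ^ n) = \<sigma> x ^ n"
  by (induction n) (auto simp: one_mem aut_one mult_mem aut_mult)

lemma aut_power_int: "x \<in> K \<Longrightarrow> x powi n \<in> K \<and> \<sigma> (x powi n) = \<sigma> x powi n"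
  by (auto simp: power_int_def aut_power inverse_mem aut_inverse)

lemma aut_prod: "finite A \<Longrightarrow> \<forall>a\<in>A. f a \<in> K \<Longrightarrow> prod f A \<in> K \<and> \<sigma> (prod f A) = (\<Prod>a\<in>A. \<sigma> (f a))"
  by (induction A rule: finite_induct) (auto simp: one_mem aut_one mult_mem aut_mult)

text \<open>This is how a single
  Galois swap isolates one exponent of a multiplicative relation.\<close>

lemma fixed_monomial_factor:
  assumes "finite I" "i \<in> I" and mem: "\<forall>j\<in>I. x j \<in> K \<and> x j \<noteq> 0"
    and fix_others: "\<forall>j\<in>I - {i}. \<sigma> (x j) = x j"
    and rel: "(\<Prod>j\<in>I. x j powi k j) = c" and fix_c: "\<sigma> c = c"
  shows "\<sigma> (x i) powi k i = x i powi k i"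
proof -
  define R where "R = (\<Prod>j\<in>I - {i}. x j powi k j)"
  have split: "(\<Prod>j\<in>I. y j powi k j) = y i powi k i * (\<Prod>j\<in>I - {i}. y j powi k j)" for y
    using prod.remove[OF assms(1,2)] by simp
  have "c = \<sigma> (\<Prod>j\<in>I. x j powi k j)" using rel fix_c by simp
  also have "\<dots> = (\<Prod>j\<in>I. \<sigma> (x j) powi k j)"
    using aut_prod[OF assms(1), of "\<lambda>j. x j powi k j"] aut_power_int mem by simp
  also have "\<dots> = \<sigma> (x i) powi k i * R"
    unfolding split R_def using fix_others by (auto intro!: prod.cong)
  finally have "c = \<sigma> (x i) powi k i * R" .
  moreover have "c = x i powi k i * R" using rel split[of x] R_def by simp
  moreover have "R \<noteq> 0" unfolding R_def using mem by (auto simp: prod_zero_iff assms(1))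
  ultimately show ?thesis by (metis mult_cancel_right)
qed

end

section \<open>Prime ideals of algebraic integers above p\<close>

lemma algebraic_int_root_of_int:
  assumes "n > 0" "x ^ n = (of_int c :: complex)"
  shows "algebraic_int x"
  by (rule algebraic_int_root[of "of_int c" "monom 1 n"])
     (use assms in \<open>auto simp: poly_monom coeff_monom degree_monom_eq\<close>)

lemma algebraic_int_powers_of_root:
  assumes "n > 0" "x ^ n = (of_int c :: complex)"
  shows "algebraic_int (x ^ j)"
proof -
  have "(x ^ j) ^ n = (x ^ n) ^ j" by (metis power_mult mult.commute)
  also have "\<dots> = of_int (c ^ j)" using assms(2) by simp
  finally show ?thesis by (rule algebraic_int_root_of_int[OF assms(1)])
qed

lemma prime_above_of_int_iff: "prime_above p PP \<Longrightarrow> of_int n \<in> PP \<longleftrightarrow> p dvd n"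
  unfolding prime_above_def by blast

lemma prime_above_mult:
  "prime_above p PP \<Longrightarrow> algebraic_int a \<Longrightarrow> algebraic_int b \<Longrightarrow> a * b \<in> PP \<Longrightarrow> a \<in> PP \<or> b \<in> PP"
  unfolding prime_above_def by blast

lemma prime_above_radical:
  assumes PP: "prime_above p PP" and alg: "\<And>j. algebraic_int (x ^ j)" and mem: "x ^ n \<in> PP"
  shows "x \<in> PP"
  using mem
proof (induction n)
  case 0
  then show ?case using PP by (simp add: prime_above_def)
next
  case (Suc n)
  then show ?case using prime_above_mult[OF PP alg[of 1] alg[of n]] by auto
qed

lemma pair_not_both_units:
  assumes "prime_above p PP" "a * b = of_int c" "p dvd c"
  shows "\<not> (padic_unit PP a \<and> padic_unit PP b)"
  using assms prime_above_of_int_iff prime_above_mult unfolding padic_unit_def by metis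

text \<open>If moreover a and b have equal m-th powers, then a^(2m) = c^m, so a is not a p-adic unit.\<close>

lemma equal_powers_not_unit:
  assumes PP: "prime_above p PP" and ab: "a * b = of_int c" and "p dvd c"
    and "m > 0" and pow: "a ^ m = b ^ m"
  shows "\<not> padic_unit PP a"
proof -
  have "a ^ (2 * m) = a ^ m * b ^ m" using pow by (simp add: mult_2 power_add)
  also have "\<dots> = of_int (c ^ m)" using ab by (simp flip: power_mult_distrib)
  finally have root: "a ^ (2 * m) = of_int (c ^ m)" .
  have "p dvd c ^ m" using \<open>p dvd c\<close> \<open>m > 0\<close> by (meson dvd_power dvd_trans)
  then have "of_int (c ^ m) \<in> PP" using prime_above_of_int_iff[OF PP] by blast
  have "a \<in> PP"
  proof (rule prime_above_radical[OF PP])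
    show "algebraic_int (a ^ j)" for j
      using algebraic_int_powers_of_root[of "2 * m" a "c ^ m"] root \<open>m > 0\<close> by simp
    show "a ^ (2 * m) \<in> PP" using root \<open>of_int (c ^ m) \<in> PP\<close> by simp
  qed
  then show ?thesis by (simp add: padic_unit_def)
qed

section \<open>Ordinarity puts exactly one unit in each pair\<close>

text \<open>Pigeonhole: a set of at least g indices in {..<2g} that never contains both j and j+g
  must meet every pair {i, i+g}.\<close>

lemma marked_set_meets_every_pair:
  fixes U :: "nat set"
  assumes sub: "U \<subseteq> {..<2*g}" and big: "g \<le> card U"
    and no_pair: "\<forall>j<g. \<not> (j \<in> U \<and> j + g \<in> U)" and "i < g"
  shows "i \<in> U \<or> i + g \<in> U"
proof (rule ccontr)
  assume miss: "\<not> (i \<in> U \<or> i + g \<in> U)"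
  have split: "j = j mod g \<or> j = j mod g + g" if "j < 2 * g" for j
    using that by (cases "j < g") (auto simp: le_mod_geq)
  have "inj_on (\<lambda>j. j mod g) U"
  proof (rule inj_onI, rule ccontr)
    fix a b assume "a \<in> U" "b \<in> U" "a mod g = b mod g" "a \<noteq> b"
    then have "a mod g \<in> U \<and> a mod g + g \<in> U" using split sub by (metis subsetD lessThan_iff)
    then show False using no_pair \<open>i < g\<close> by simp
  qed
  moreover have "(\<lambda>j. j mod g) ` U \<subseteq> {..<g} - {i}"
    using split sub miss \<open>i < g\<close> by fastforce
  ultimately have "card U \<le> card ({..<g} - {i})"
    by (metis card_image card_mono finite_Diff finite_lessThan)
  then show False using big \<open>i < g\<close> by simp
qed

lemma ordinary_unit_in_each_pair:
  assumes PP: "prime_above p PP" and ord: "ordinary PP g tau" and "p dvd c"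
    and pair: "\<forall>j<g. tau j * tau (j + g) = of_int c" and "i < g"
  shows "padic_unit PP (tau i) \<or> padic_unit PP (tau (i + g))"
  using marked_set_meets_every_pair[of "{j. j < 2*g \<and> padic_unit PP (tau j)}" g i]
    ord pair_not_both_units[OF PP _ \<open>p dvd c\<close>] pair \<open>i < g\<close>
  by (auto simp: ordinary_def)

section \<open>Multiplicative independence of the Frobenius eigenvalues\<close>

lemma power_int_eq_1_imp_zero:
  assumes "(x::real) > 1" "x powi k = 1"
  shows "k = 0"
  using power_int_strict_increasing[of 0 k x] power_int_strict_increasing[of k 0 x] assms
  by (cases k "0::int" rule: linorder_cases) auto

lemma power_int_eq_imp_power_eq:
  "(x::complex) \<noteq> 0 \<Longrightarrow> x powi k = y powi k \<Longrightarrow> x ^ nat \<bar>k\<bar> = y ^ nat \<bar>k\<bar>"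
  by (metis abs_if_raw eq_abs_iff' int_eq_iff power_int_minus power_int_of_nat)

lemma pairs_multiplicatively_independent:
  fixes tau :: "nat \<Rightarrow> complex" and c :: int
  assumes K: "is_subfield_C K" and tau_mem: "\<forall>j<2*g. tau j \<in> K"
    and PP: "prime_above p PP" and "p dvd c" and "c > 1"
    and pair: "\<forall>j<g. tau j * tau (j + g) = of_int c"
    and unit: "\<forall>i<g. padic_unit PP (tau i) \<or> padic_unit PP (tau (i + g))"
    and swaps: "\<forall>i<g. \<exists>\<sigma>\<in>field_auts K. \<sigma> (tau i) = tau (i + g) \<and>
        (\<forall>j<g. j \<noteq> i \<longrightarrow> \<sigma> (tau j) = tau j)"
    and rel: "(\<Prod>i<g. tau i powi k i) = of_int c powi k0"
  shows "k0 = 0 \<and> (\<forall>i<g. k i = 0)"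
proof -
  have nonzero: "tau j \<noteq> 0" if "j < g" for j using pair that \<open>c > 1\<close> by force
  have exponents: "k i = 0" if "i < g" for i
  proof (rule ccontr)
    assume "k i \<noteq> 0"
    obtain \<sigma> where \<sigma>: "\<sigma> \<in> field_auts K" "\<sigma> (tau i) = tau (i + g)"
      "\<forall>j<g. j \<noteq> i \<longrightarrow> \<sigma> (tau j) = tau j"
      using swaps \<open>i < g\<close> by blast
    interpret subfield_aut K \<sigma> using K \<sigma>(1) by unfold_locales
    have "tau (i + g) powi k i = tau i powi k i"
      using fixed_monomial_factor[of "{..<g}" i tau k, OF _ _ _ _ rel] aut_power_int aut_of_int
        \<sigma> tau_mem nonzero \<open>i < g\<close> by auto
    moreover have "tau (i + g) \<noteq> 0" using pair nonzero \<open>i < g\<close> \<open>c > 1\<close> by force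
    ultimately have pow: "tau i ^ nat \<bar>k i\<bar> = tau (i + g) ^ nat \<bar>k i\<bar>"
      using power_int_eq_imp_power_eq by metis
    have m: "nat \<bar>k i\<bar> > 0" using \<open>k i \<noteq> 0\<close> by simp
    have "\<not> padic_unit PP (tau i)"
      using equal_powers_not_unit[OF PP _ \<open>p dvd c\<close> m pow] pair \<open>i < g\<close> by blast
    moreover have "\<not> padic_unit PP (tau (i + g))"
      using equal_powers_not_unit[OF PP _ \<open>p dvd c\<close> m pow[symmetric]] pair \<open>i < g\<close>
      by (metis mult.commute)
    ultimately show False using unit \<open>i < g\<close> by blast
  qed
  then have "complex_of_int c powi k0 = 1" using rel by simp
  then have "real_of_int c powi k0 = 1"
    by (metis of_real_of_int_eq of_real_power_int of_real_eq_1_iff)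
  then have "k0 = 0" using power_int_eq_1_imp_zero[of "real_of_int c" k0] \<open>c > 1\<close> by simp
  then show ?thesis using exponents by simp
qed

section \<open>From angles to eigenvalues\<close>

lemma angle_pair_product:
  fixes q t :: real
  assumes "q \<ge> 0"
  shows "(of_real (sqrt q) * exp (\<i> * of_real (pi * t))) *
         (of_real (sqrt q) * exp (- \<i> * of_real (pi * t))) = complex_of_real q"
proof -
  have "(of_real (sqrt q) * exp (\<i> * of_real (pi * t))) * (of_real (sqrt q) * exp (- \<i> * of_real (pi * t)))
      = (of_real (sqrt q) * of_real (sqrt q)) * (exp (\<i> * of_real (pi * t)) * exp (- \<i> * of_real (pi * t)))"
    by (simp only: mult_ac)
  also have "of_real (sqrt q) * of_real (sqrt q) = complex_of_real q"
    using assms by (simp flip: of_real_mult)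
  finally show ?thesis by (simp flip: exp_add)
qed

lemma angle_power_int:
  fixes q t :: real and k :: int
  assumes "q \<ge> 0"
  shows "(of_real (sqrt q) * exp (\<i> * of_real (pi * t))) powi (2 * k)
       = complex_of_real q powi k * exp (\<i> * of_real (2 * pi * (of_int k * t)))"
proof -
  have "complex_of_real (sqrt q) powi (2 * k) = (complex_of_real (sqrt q) powi 2) powi k"
    by (rule power_int_mult)
  also have "\<dots> = complex_of_real q powi k"
    using assms by (simp flip: of_real_power)
  finally have modulus: "complex_of_real (sqrt q) powi (2 * k) = complex_of_real q powi k" .
  have "exp (\<i> * of_real (pi * t)) powi (2 * k) = exp (of_int (2 * k) * (\<i> * of_real (pi * t)))"
    by (rule exp_power_int)
  also have "\<dots> = exp (\<i> * of_real (2 * pi * (of_int k * t)))"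
    by (simp add: algebra_simps)
  finally show ?thesis using modulus by (simp add: power_int_mult_distrib)
qed

lemma angle_relation_to_eigenvalue_relation:
  fixes q :: real and theta :: "nat \<Rightarrow> real" and tau :: "nat \<Rightarrow> complex"
  assumes "q > 0"
    and tau: "\<forall>i<g. tau i = of_real (sqrt q) * exp (\<i> * of_real (pi * theta i))"
    and rel: "of_int k0 + (\<Sum>i<g. of_int (k i) * theta i) = 0"
  shows "(\<Prod>i<g. tau i powi (2 * k i)) = complex_of_real q powi (\<Sum>i<g. k i)"
proof -
  have "(\<Prod>i<g. tau i powi (2 * k i))
      = (\<Prod>i<g. complex_of_real q powi k i) * (\<Prod>i<g. exp (\<i> * of_real (2 * pi * (of_int (k i) * theta i))))"
    using tau angle_power_int \<open>q > 0\<close> by (simp add: prod.distrib)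
  also have "(\<Prod>i<g. complex_of_real q powi k i) = complex_of_real q powi (\<Sum>i<g. k i)"
    using \<open>q > 0\<close> by (induction g) (simp_all add: power_int_add)
  also have "(\<Prod>i<g. exp (\<i> * of_real (2 * pi * (of_int (k i) * theta i))))
      = exp (\<i> * of_real (2 * pi * (\<Sum>i<g. of_int (k i) * theta i)))"
    by (simp add: exp_sum sum_distrib_left sum_distrib_right)
  also have "(\<Sum>i<g. of_int (k i) * theta i) = of_int (- k0)" using rel by simp
  also have "exp (\<i> * of_real (2 * pi * of_int (- k0))) = exp (\<i> * (of_int (- k0) * (of_real pi * 2)))"
    by (simp add: mult_ac)
  also have "\<dots> = 1" by (rule exp_2pi_1_int)
  finally show ?thesis by simp
qed

theorem mainTheorem6:
  fixes p :: int and e g :: nat and q :: real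
    and tau :: "nat \<Rightarrow> complex" and theta :: "nat \<Rightarrow> real"
    and PP :: "complex set" and \<Phi> :: "(complex \<Rightarrow> complex) \<Rightarrow> nat \<Rightarrow> nat"
  assumes p_prime: "prime p" and e_pos: "e \<ge> 1" and q_def: "q = real_of_int (p ^ e)"
    and g_pos: "g \<ge> 1"
    and P_int: "\<forall>n. coeff (\<Prod>j<2*g. [:1, - tau j:]) n \<in> \<int>"
    and theta_range: "\<forall>j<g. 0 \<le> theta j \<and> theta j \<le> 1"
    and tau_angle: "\<forall>j<g. tau j = complex_of_real (sqrt q) * exp (\<i> * complex_of_real (pi * theta j))"
    and tau_conj: "\<forall>j<g. tau (j + g) = complex_of_real (sqrt q) * exp (- \<i> * complex_of_real (pi * theta j))"
    and PP_place: "prime_above p PP"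
    and ord: "ordinary PP g tau"
    and gal_weyl: "bij_betw \<Phi> (field_auts (gen_field (tau ` {..<2*g}))) (weyl_Sp g)"
    and gal_action: "\<forall>\<sigma>\<in>field_auts (gen_field (tau ` {..<2*g})). \<forall>j<2*g. \<sigma> (tau j) = tau (\<Phi> \<sigma> j)"
    and gal_swaps: "\<forall>i<g. \<exists>\<sigma>\<in>field_auts (gen_field (tau ` {..<2*g})).
        \<sigma> (tau i) = tau (i + g) \<and> \<sigma> (tau (i + g)) = tau i \<and>
        (\<forall>j<g. j \<noteq> i \<longrightarrow> \<sigma> (tau j) = tau j \<and> \<sigma> (tau (j + g)) = tau (j + g))"
  shows "(\<forall>(k0::int) (k::nat \<Rightarrow> int).
            of_int k0 + (\<Sum>i<g. of_int (k i) * theta i) = 0 \<longrightarrow> k0 = 0 \<and> (\<forall>i<g. k i = 0))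
       \<and> (\<forall>(k0::int) (k::nat \<Rightarrow> int).
            (\<Prod>i<g. tau i powi k i) = complex_of_real q powi k0 \<longrightarrow> k0 = 0 \<and> (\<forall>i<g. k i = 0))"
proof -
  define c where "c = p ^ e"
  have "p > 1" using p_prime by (simp add: prime_gt_1_int)
  then have "c > 1" "p dvd c" using e_pos by (simp_all add: c_def dvd_power)
  have q_c: "complex_of_real q = of_int c" by (simp add: q_def c_def)
  have "q > 0" using \<open>c > 1\<close> q_def c_def by linarith
  have pair: "\<forall>j<g. tau j * tau (j + g) = of_int c"
  proof (intro allI impI)
    fix j assume "j < g"
    then show "tau j * tau (j + g) = of_int c"
      unfolding tau_angle[rule_format, OF \<open>j < g\<close>] tau_conj[rule_format, OF \<open>j < g\<close>] q_c[symmetric]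
      using \<open>q > 0\<close> by (intro angle_pair_product) simp
  qed
  have mult_indep: "k0 = 0 \<and> (\<forall>i<g. k i = 0)"
    if "(\<Prod>i<g. tau i powi k i) = complex_of_real q powi k0" for k0 k
  proof (rule pairs_multiplicatively_independent[OF gen_field_subfield _ PP_place \<open>p dvd c\<close> \<open>c > 1\<close> pair])
    show "\<forall>j<2*g. tau j \<in> gen_field (tau ` {..<2*g})"
      using gen_field_contains[of "tau ` {..<2*g}"] by (simp add: image_subset_iff)
    show "\<forall>i<g. padic_unit PP (tau i) \<or> padic_unit PP (tau (i + g))"
      using ordinary_unit_in_each_pair[OF PP_place ord \<open>p dvd c\<close> pair] by blast
    show "\<forall>i<g. \<exists>\<sigma>\<in>field_auts (gen_field (tau ` {..<2*g})). \<sigma> (tau i) = tau (i + g) \<and>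
        (\<forall>j<g. j \<noteq> i \<longrightarrow> \<sigma> (tau j) = tau j)" using gal_swaps by meson
    show "(\<Prod>i<g. tau i powi k i) = of_int c powi k0" using that q_c by simp
  qed
  have add_indep: "k0 = 0 \<and> (\<forall>i<g. k i = 0)"
    if rel: "of_int k0 + (\<Sum>i<g. of_int (k i) * theta i) = 0" for k0 k
  proof -
    have "(\<Prod>i<g. tau i powi (2 * k i)) = complex_of_real q powi (\<Sum>i<g. k i)"
      using angle_relation_to_eigenvalue_relation[OF \<open>q > 0\<close> tau_angle rel] .
    then have "\<forall>i<g. 2 * k i = 0" using mult_indep[where k = "\<lambda>i. 2 * k i"] by blast
    then have "\<forall>i<g. k i = 0" by simp
    then show ?thesis using rel by simp
  qed
  show ?thesis using mult_indep add_indep by blast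
qed

end
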